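(* For all integers $u\ge5$, $$9\,T_{24}^{(3\cdot 2^u)}\equiv T_0+2^{u-3}T_1\pmod{2^u},$$ where $T_0=\mathrm{Toepl}\big((0,0,0,0,0,0,0,0,1,0,0,0,0,0,0,0,2,0,0,0,0,0,0,0),\,(0,0,0,0,0,0,0,-1,0,0,0,0,0,0,0,-2,0,0,0,0,0,0,0)\big)$ and $T_1=\mathrm{Toepl}\big((3,0,0,0,4,0,0,0,3,0,4,0,6,0,4,0,4,0,4,0,6,0,4,0),\,(0,0,0,4,0,0,0,2,0,4,0,2,0,4,0,1,0,4,0,2,0,4,0)\big)$.
   Context: For integers $k,i\ge0$, $T_k^{(i)}$ is the $k\times k$ integer matrix $\big(\sum_{\alpha\in\mathbb{Z}}\alpha\binom{i}{\alpha k+r-s}\big)_{1\le r,s\le k}$, with $\binom{a}{b}=0$ if $b<0$ or $b>a$. For a $k$-tuple $S_1=(u_0,u_1,\dots,u_{k-1})$ and a $(k-1)$-tuple $S_2=(u_{-1},u_{-2},\dots,u_{-(k-1)})$, $\mathrm{Toepl}(S_1,S_2)$ is the $k\times k$ matrix whose $(r,s)$ entry is $u_{r-s}$. Congruence of matrices is entrywise. *)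

theory Defs
  imports "HOL-Number_Theory.Cong"
begin

definition binz :: "nat \<Rightarrow> int \<Rightarrow> int" where
  "binz a b = (if 0 \<le> b \<and> b \<le> int a then int (a choose nat b) else 0)"

text \<open>Entry (r,s), 1 \<le> r,s \<le> k, of T_k^(i): the sum over all integers alpha of
  alpha * binom(i, alpha*k + r - s); only alphas in the (finite, for k>0) support
  set contribute, all other terms are zero.\<close>
definition Tmat :: "nat \<Rightarrow> nat \<Rightarrow> nat \<Rightarrow> nat \<Rightarrow> int" where
  "Tmat k i r s = (\<Sum>\<alpha> \<in> {\<alpha>::int. 0 \<le> \<alpha> * int k + int r - int s \<and> \<alpha> * int k + int r - int s \<le> int i}.
       \<alpha> * binz i (\<alpha> * int k + int r - int s))"

text \<open>Toeplitz matrix: S1 = [u_0,...,u_{k-1}], S2 = [u_{-1},...,u_{-(k-1)}];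
  entry (r,s) is u_{r-s}.\<close>
definition toepl :: "int list \<Rightarrow> int list \<Rightarrow> nat \<Rightarrow> nat \<Rightarrow> int" where
  "toepl S1 S2 r s = (if s \<le> r then S1 ! (r - s) else S2 ! (s - r - 1))"

definition T0 :: "nat \<Rightarrow> nat \<Rightarrow> int" where
  "T0 = toepl [0,0,0,0,0,0,0,0,1,0,0,0,0,0,0,0,2,0,0,0,0,0,0,0]
              [0,0,0,0,0,0,0,-1,0,0,0,0,0,0,0,-2,0,0,0,0,0,0,0]"

definition T1 :: "nat \<Rightarrow> nat \<Rightarrow> int" where
  "T1 = toepl [3,0,0,0,4,0,0,0,3,0,4,0,6,0,4,0,4,0,4,0,6,0,4,0]
              [0,0,0,4,0,0,0,2,0,4,0,2,0,4,0,1,0,4,0,2,0,4,0]"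

end

theory Submission
  imports Defs "HOL-Computational_Algebra.Polynomial"
begin

text \<open>
  The entry (r, s) of T_k^(i) is a pairing of the coefficients of (1 + x)^i with the weight
  m \<mapsto> (m - d) / k on the residue class of d = r - s modulo k (and 0 off it). This weight
  has vanishing second difference with step k, so the pairing kills the ideal generated by
  (x^k - 1)^2 and turns polynomial congruences modulo (2^u, (x^24 - 1)^2) into integer
  congruences modulo 2^u. It therefore suffices to show
  9 (1 + x)^(3 2^u) \<equiv> A0 + 2^(u-3) A1 modulo (2^u, (x^24 - 1)^2), where A0 and A1 pair to
  T0 and T1. This goes by induction on u: the case u = 5 is a finite computation; squaring
  turns a congruence modulo 2^u into one modulo 2^(u+1); and
  (A0 + 2^(u-3) A1)^2 \<equiv> 9 (A0 + 2^(u-2) A1) modulo 2^(u+1) follows from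
  A0^2 \<equiv> 9 A0, A0 A1 \<equiv> 9 A1 (mod 8) and A1^2 \<equiv> 0 (mod 4). Finally 9 is a unit
  modulo 2^(u+1).
\<close>

definition cong2 :: "'a::comm_ring_1 \<Rightarrow> 'a \<Rightarrow> 'a \<Rightarrow> 'a \<Rightarrow> bool"
    ("(1[_ = _] '(' mod _, _'))")
  where "[p = q] (mod m, D) \<longleftrightarrow> (\<exists>P Q. p - q = m * P + D * Q)"

lemma cong2I: "p - q = m * P + D * Q \<Longrightarrow> [p = q] (mod m, D)"
  unfolding cong2_def by blast

lemma cong2_refl: "[p = p] (mod m, D)"
  by (rule cong2I[of _ _ _ 0 _ 0]) simp

lemma cong2_sym:
  assumes "[p = q] (mod m, D)" shows "[q = p] (mod m, D)"
proof -
  obtain P Q where "p - q = m * P + D * Q" using assms unfolding cong2_def by blast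
  then have "q - p = m * (- P) + D * (- Q)" by (simp add: algebra_simps)
  then show ?thesis by (rule cong2I)
qed

lemma cong2_trans:
  assumes "[p = q] (mod m, D)" "[q = r] (mod m, D)" shows "[p = r] (mod m, D)"
proof -
  obtain P Q P' Q' where "p - q = m * P + D * Q" "q - r = m * P' + D * Q'"
    using assms unfolding cong2_def by blast
  then have "p - r = m * (P + P') + D * (Q + Q')" by (simp add: algebra_simps)
  then show ?thesis by (rule cong2I)
qed

lemma cong2_add:
  assumes "[p = q] (mod m, D)" "[p' = q'] (mod m, D)" shows "[p + p' = q + q'] (mod m, D)"
proof -
  obtain P Q P' Q' where "p - q = m * P + D * Q" "p' - q' = m * P' + D * Q'"
    using assms unfolding cong2_def by blast
  then have "p + p' - (q + q') = m * (P + P') + D * (Q + Q')" by (simp add: algebra_simps)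
  then show ?thesis by (rule cong2I)
qed

lemma cong2_mult:
  assumes "[p = q] (mod m, D)" "[p' = q'] (mod m, D)"
  shows "[p * p' = q * q'] (mod m, D)"
proof -
  obtain P Q P' Q' where "p - q = m * P + D * Q" "p' - q' = m * P' + D * Q'"
    using assms unfolding cong2_def by blast
  then have "p * p' - q * q' = m * (P * p' + q * P') + D * (Q * p' + q * Q')"
    by (simp add: algebra_simps flip: right_diff_distrib left_diff_distrib)
  then show ?thesis by (rule cong2I)
qed

lemma cong2_scale:
  assumes "[p = q] (mod m, D)" shows "[c * p = c * q] (mod c * m, D)"
proof -
  obtain P Q where "p - q = m * P + D * Q" using assms unfolding cong2_def by blast
  then have "c * p - c * q = c * m * P + D * (c * Q)"
    by (simp add: algebra_simps flip: right_diff_distrib)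
  then show ?thesis by (rule cong2I)
qed

lemma cong2_dvd_modulus:
  assumes "m dvd m'" "[p = q] (mod m', D)" shows "[p = q] (mod m, D)"
proof -
  obtain e where "m' = m * e" using assms(1) by blast
  moreover obtain P Q where "p - q = m' * P + D * Q" using assms(2) unfolding cong2_def by blast
  ultimately have "p - q = m * (e * P) + D * Q" by (simp add: mult.assoc)
  then show ?thesis by (rule cong2I)
qed

lemma cong2_square_lift:
  assumes "[p = q] (mod 2 * m, D)"
  shows "[p ^ 2 = q ^ 2] (mod 4 * m, D)"
proof -
  obtain P Q where "p - q = 2 * m * P + D * Q" using assms unfolding cong2_def by blast
  then have "p = q + 2 * m * P + D * Q" by (simp add: algebra_simps)
  then have "p ^ 2 - q ^ 2 = 4 * m * (q * P + m * P * P) + D * (Q * (p + q) + 2 * m * P * Q)"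
    by (simp add: algebra_simps power2_eq_square)
  then show ?thesis by (rule cong2I)
qed

lemma cong2_cancel_unit:
  assumes unit: "c * c' + m * j = 1" and "[c * p = c * q] (mod m, D)"
  shows "[p = q] (mod m, D)"
proof -
  obtain P Q where PQ: "c * p - c * q = m * P + D * Q"
    using assms(2) unfolding cong2_def by blast
  have "p - q = (c * c' + m * j) * (p - q)" by (simp add: unit)
  also have "\<dots> = c' * (c * p - c * q) + m * j * (p - q)" by (simp add: algebra_simps)
  also have "\<dots> = m * (c' * P + j * (p - q)) + D * (c' * Q)" by (simp add: PQ algebra_simps)
  finally show ?thesis by (rule cong2I)
qed

definition reduce_mod :: "int \<Rightarrow> int poly \<Rightarrow> int poly \<Rightarrow> int poly" where
  "reduce_mod m D p = map_poly (\<lambda>c. c mod m) (pseudo_mod p D)"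

lemma pseudo_mod_monic:
  fixes p D :: "'a::{comm_ring_1,semiring_1_no_zero_divisors} poly"
  assumes "lead_coeff D = 1"
  obtains q where "p = D * q + pseudo_mod p D"
proof -
  have "D \<noteq> 0" using assms by auto
  have "pseudo_divmod p D = (fst (pseudo_divmod p D), pseudo_mod p D)"
    by (simp add: pseudo_mod_def)
  from pseudo_divmod(1)[OF \<open>D \<noteq> 0\<close> this] assms
  have "p = D * fst (pseudo_divmod p D) + pseudo_mod p D" by simp
  then show ?thesis by (rule that)
qed

lemma cong2_reduce_mod:
  assumes "lead_coeff D = 1"
  shows "[p = reduce_mod m D p] (mod [:m:], D)"
proof -
  obtain q where q: "p = D * q + pseudo_mod p D" using pseudo_mod_monic[OF assms] .
  have "pseudo_mod p D - reduce_mod m D p = [:m:] * map_poly (\<lambda>c. c div m) (pseudo_mod p D)"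
    by (rule poly_eqI) (simp add: reduce_mod_def coeff_map_poly minus_mod_eq_mult_div)
  then have "p - reduce_mod m D p = [:m:] * map_poly (\<lambda>c. c div m) (pseudo_mod p D) + D * q"
    by (subst q) (simp add: algebra_simps)
  then show ?thesis by (rule cong2I)
qed

lemma cong2_if_reduce_mod_eq:
  assumes "lead_coeff D = 1" "reduce_mod m D p = reduce_mod m D q"
  shows "[p = q] (mod [:m:], D)"
proof -
  have "[p = reduce_mod m D q] (mod [:m:], D)"
    using cong2_reduce_mod[OF assms(1), of p m] unfolding assms(2) .
  then show ?thesis by (rule cong2_trans[OF _ cong2_sym[OF cong2_reduce_mod[OF assms(1)]]])
qed

lemma cong2_power_two_power:
  assumes "lead_coeff D = 1"
  shows "[p ^ 2 ^ n = ((\<lambda>q. reduce_mod m D (q ^ 2)) ^^ n) p] (mod [:m:], D)"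
proof (induction n)
  case 0
  show ?case by (simp add: cong2_refl)
next
  case (Suc n)
  let ?q = "((\<lambda>q. reduce_mod m D (q ^ 2)) ^^ n) p"
  have "p ^ 2 ^ Suc n = (p ^ 2 ^ n) ^ 2" by (simp add: power_mult[symmetric] mult.commute)
  then have "[p ^ 2 ^ Suc n = ?q ^ 2] (mod [:m:], D)"
    using cong2_mult[OF Suc.IH Suc.IH] by (simp only: power2_eq_square)
  then show ?case using cong2_trans[OF _ cong2_reduce_mod[OF assms]] by simp
qed

definition coeff_pairing :: "(nat \<Rightarrow> 'a) \<Rightarrow> 'a::comm_semiring_0 poly \<Rightarrow> 'a" where
  "coeff_pairing f p = (\<Sum>m\<le>degree p. f m * coeff p m)"

lemma coeff_pairing_eq_sum:
  assumes "degree p < n"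
  shows "coeff_pairing f p = (\<Sum>m<n. f m * coeff p m)"
  unfolding coeff_pairing_def
  by (rule sum.mono_neutral_left) (use assms in \<open>auto simp: coeff_eq_0\<close>)

lemma coeff_pairing_add: "coeff_pairing f (p + q) = coeff_pairing f p + coeff_pairing f q"
proof -
  define n where "n = Suc (max (degree p) (degree q))"
  have "degree (p + q) < n" "degree p < n" "degree q < n"
    unfolding n_def using degree_add_le_max[of p q] by auto
  then show ?thesis by (simp add: coeff_pairing_eq_sum distrib_left sum.distrib)
qed

lemma coeff_pairing_smult: "coeff_pairing f (smult c p) = c * coeff_pairing f p"
proof -
  have "degree (smult c p) < Suc (degree p)" "degree p < Suc (degree p)"
    using degree_smult_le[of c p] by auto
  then show ?thesis
    by (simp add: coeff_pairing_eq_sum[of _ "Suc (degree p)"] sum_distrib_left mult.left_commute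
        del: sum.lessThan_Suc)
qed

lemma coeff_pairing_monom_mult:
  fixes f :: "nat \<Rightarrow> 'a::comm_semiring_1"
  shows "coeff_pairing f (monom 1 k * p) = coeff_pairing (\<lambda>m. f (m + k)) p"
proof -
  have shift: "(\<Sum>m<n + k. f m * coeff (monom 1 k * p) m) = (\<Sum>j<n. f (j + k) * coeff p j)" for n
    by (induction n) (simp_all add: coeff_monom_mult add.commute)
  have "degree (monom 1 k * p) < Suc (degree p) + k"
    using degree_mult_le[of "monom 1 k" p] degree_monom_le[of "1::'a" k] by linarith
  then have "coeff_pairing f (monom 1 k * p) = (\<Sum>j<Suc (degree p). f (j + k) * coeff p j)"
    by (simp only: coeff_pairing_eq_sum shift)
  also have "\<dots> = coeff_pairing (\<lambda>m. f (m + k)) p"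
    by (simp only: coeff_pairing_eq_sum[symmetric] lessI)
  finally show ?thesis .
qed

lemma coeff_pairing_diff:
  fixes f :: "nat \<Rightarrow> 'a::comm_ring"
  shows "coeff_pairing f (p - q) = coeff_pairing f p - coeff_pairing f q"
  using coeff_pairing_add[of f "p - q" q] by simp

lemma coeff_pairing_annihilates:
  fixes f :: "nat \<Rightarrow> 'a::comm_ring_1"
  assumes "\<And>m. f (m + 2 * k) - 2 * f (m + k) + f m = 0"
  shows "coeff_pairing f ((monom 1 k - 1) ^ 2 * Q) = 0"
proof -
  have "(monom 1 k - 1) ^ 2 * Q = monom 1 k * (monom 1 k * Q) - smult 2 (monom 1 k * Q) + Q"
    by (simp add: power2_eq_square algebra_simps numeral_poly)
  then have "coeff_pairing f ((monom 1 k - 1) ^ 2 * Q) =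
      coeff_pairing (\<lambda>m. f (m + 2 * k)) Q - 2 * coeff_pairing (\<lambda>m. f (m + k)) Q + coeff_pairing f Q"
    by (simp only: coeff_pairing_add coeff_pairing_diff coeff_pairing_smult
        coeff_pairing_monom_mult add.assoc mult_2)
  also have "\<dots> = coeff_pairing (\<lambda>m. f (m + 2 * k) - 2 * f (m + k) + f m) Q"
    unfolding coeff_pairing_def
    by (simp add: ring_distribs sum.distrib sum_subtractf sum_distrib_left mult.assoc)
  also have "\<dots> = 0" by (simp add: assms coeff_pairing_def)
  finally show ?thesis .
qed

lemma coeff_pairing_cong2:
  fixes f :: "nat \<Rightarrow> 'a::comm_ring_1"
  assumes "\<And>m. f (m + 2 * k) - 2 * f (m + k) + f m = 0"
    and "[p = q] (mod [:c:], (monom 1 k - 1) ^ 2)"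
  shows "c dvd coeff_pairing f p - coeff_pairing f q"
proof -
  obtain P Q where PQ: "p - q = [:c:] * P + (monom 1 k - 1) ^ 2 * Q"
    using assms(2) unfolding cong2_def by blast
  have "coeff_pairing f p - coeff_pairing f q = coeff_pairing f (p - q)"
    by (simp add: coeff_pairing_diff)
  also have "\<dots> = c * coeff_pairing f P"
    by (simp add: PQ coeff_pairing_add coeff_pairing_smult coeff_pairing_annihilates[OF assms(1)])
  finally show ?thesis by simp
qed

definition toeplitz_weight :: "nat \<Rightarrow> int \<Rightarrow> nat \<Rightarrow> int" where
  "toeplitz_weight k d m = (if int k dvd int m - d then (int m - d) div int k else 0)"

lemma toeplitz_weight_shift:
  assumes "0 < k"
  shows "toeplitz_weight k d (m + j * k) =
    toeplitz_weight k d m + (if int k dvd int m - d then int j else 0)"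
proof -
  have shift: "(if int k dvd x + int j * int k then (x + int j * int k) div int k else 0) =
      (if int k dvd x then x div int k else 0) + (if int k dvd x then int j else 0)" for x
    using assms by (auto simp: dvd_add_left_iff)
  have "int (m + j * k) - d = (int m - d) + int j * int k" by simp
  then show ?thesis unfolding toeplitz_weight_def by (simp only: shift)
qed

lemma toeplitz_weight_second_difference:
  assumes "0 < k"
  shows "toeplitz_weight k d (m + 2 * k) - 2 * toeplitz_weight k d (m + k) + toeplitz_weight k d m = 0"
  using toeplitz_weight_shift[OF assms, of d m 2] toeplitz_weight_shift[OF assms, of d m 1] by simp

lemma Tmat_eq_coeff_pairing:
  assumes "0 < k"
  shows "Tmat k i r s = coeff_pairing (toeplitz_weight k (int r - int s)) ([:1, 1:] ^ i)"
proof -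
  define d where "d = int r - int s"
  define A where "A = {\<alpha>::int. 0 \<le> \<alpha> * int k + d \<and> \<alpha> * int k + d \<le> int i}"
  define M where "M = {m. m \<le> i \<and> int k dvd int m - d}"
  have "Tmat k i r s = (\<Sum>\<alpha>\<in>A. \<alpha> * binz i (\<alpha> * int k + d))"
    unfolding Tmat_def A_def d_def by (simp add: add_diff_eq)
  also have "\<dots> = (\<Sum>m\<in>M. toeplitz_weight k d m * int (i choose m))"
  proof (rule sum.reindex_bij_witness[where i = "\<lambda>m. (int m - d) div int k"
        and j = "\<lambda>\<alpha>. nat (\<alpha> * int k + d)"])
    fix \<alpha> assume "\<alpha> \<in> A"
    then show "(int (nat (\<alpha> * int k + d)) - d) div int k = \<alpha>"
      and "nat (\<alpha> * int k + d) \<in> M"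
      and "toeplitz_weight k d (nat (\<alpha> * int k + d)) * int (i choose nat (\<alpha> * int k + d)) =
        \<alpha> * binz i (\<alpha> * int k + d)"
      using assms unfolding A_def M_def toeplitz_weight_def binz_def by auto
  next
    fix m assume "m \<in> M"
    then have "(int m - d) div int k * int k = int m - d" unfolding M_def by simp
    with \<open>m \<in> M\<close> show "nat ((int m - d) div int k * int k + d) = m"
      and "(int m - d) div int k \<in> A"
      unfolding A_def M_def by auto
  qed
  also have "\<dots> = coeff_pairing (toeplitz_weight k d) ([:1, 1:] ^ i)"
    unfolding coeff_pairing_def degree_linear_power
    by (rule sum.mono_neutral_cong_left)
      (auto simp: M_def toeplitz_weight_def coeff_linear_poly_power)
  finally show ?thesis unfolding d_def .
qed

definition D24 :: "int poly" where
  "D24 = (monom 1 24 - 1) ^ 2"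

definition A0 :: "int poly" where
  "A0 = [:6,0,0,0,0,0,0,0,-4,0,0,0,0,0,0,0,-5,0,0,0,0,0,0,0,0,0,0,0,0,0,0,0,1,0,0,0,0,0,0,0,2:]"

definition A1 :: "int poly" where
  "A1 = [:1,0,4,0,-6,0,4,0,-5,0,-4,0,-10,0,-4,0,-6,0,-8,0,-8,0,-8,0,
          3,0,0,0,4,0,0,0,3,0,4,0,6,0,4,0,4,0,4,0,6,0,4:]"

lemma lead_coeff_D24: "lead_coeff D24 = 1"
  unfolding D24_def by code_simp

lemma A0_square_cong: "[A0 ^ 2 = 9 * A0] (mod 0, D24)"
proof -
  have "reduce_mod 0 D24 (A0 ^ 2) = reduce_mod 0 D24 (9 * A0)"
    unfolding A0_def D24_def reduce_mod_def by code_simp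
  from cong2_if_reduce_mod_eq[OF lead_coeff_D24 this] show ?thesis by simp
qed

lemma A0_A1_cong: "[A0 * A1 = 9 * A1] (mod 8, D24)"
proof -
  have "reduce_mod 8 D24 (A0 * A1) = reduce_mod 8 D24 (9 * A1)"
    unfolding A0_def A1_def D24_def reduce_mod_def by code_simp
  from cong2_if_reduce_mod_eq[OF lead_coeff_D24 this] show ?thesis by (simp add: numeral_poly)
qed

lemma A1_square_cong: "[A1 ^ 2 = 0] (mod 4, D24)"
proof -
  have "reduce_mod 4 D24 (A1 ^ 2) = reduce_mod 4 D24 0"
    unfolding A1_def D24_def reduce_mod_def by code_simp
  from cong2_if_reduce_mod_eq[OF lead_coeff_D24 this] show ?thesis by (simp add: numeral_poly)
qed

lemma binomial_power_cong_base: "[9 * [:1, 1:] ^ (3 * 2 ^ 5) = A0 + 2 ^ 2 * A1] (mod 2 ^ 5, D24)"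
proof -
  define G where "G = ((\<lambda>q. reduce_mod 32 D24 (q ^ 2)) ^^ 5) ([:1, 1:] ^ 3)"
  have "[[:1, 1:] ^ (3 * 2 ^ 5) = G] (mod 32, D24)"
    using cong2_power_two_power[OF lead_coeff_D24, of "[:1, 1:] ^ 3" 5 32]
    by (simp add: G_def numeral_poly power_mult)
  then have power: "[9 * [:1, 1:] ^ (3 * 2 ^ 5) = 9 * G] (mod 32, D24)"
    by (rule cong2_mult[OF cong2_refl])
  have "reduce_mod 32 D24 (9 * G) = reduce_mod 32 D24 (A0 + 4 * A1)"
    unfolding G_def A0_def A1_def D24_def reduce_mod_def by code_simp
  from cong2_if_reduce_mod_eq[OF lead_coeff_D24 this]
  have "[9 * G = A0 + 4 * A1] (mod 32, D24)" by (simp add: numeral_poly)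
  with power show ?thesis by (simp add: cong2_trans)
qed

lemma square_A0_A1_cong:
  assumes "5 \<le> u"
  shows "[(A0 + 2 ^ (u - 3) * A1) ^ 2 = 9 * (A0 + 2 ^ (u - 2) * A1)] (mod 2 ^ (u + 1), D24)"
proof -
  define e :: "int poly" where "e = 2 ^ (u - 5)"
  have u: "u = (u - 5) + 5" using assms by simp
  have powers: "2 ^ (u - 3) = 4 * e" "2 ^ (u - 2) = 8 * e" "2 ^ (u + 1) = 64 * e"
    unfolding e_def by (subst u; simp add: power_add)+
  have "[A0 ^ 2 = 9 * A0] (mod 64 * e, D24)"
    by (rule cong2_dvd_modulus[OF _ A0_square_cong]) simp
  moreover have "[8 * e * (A0 * A1) = 8 * e * (9 * A1)] (mod 64 * e, D24)"
    using cong2_scale[OF A0_A1_cong, of "8 * e"] by (simp add: mult.commute mult.left_commute)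
  moreover have "[16 * e ^ 2 * A1 ^ 2 = 16 * e ^ 2 * 0] (mod 64 * e, D24)"
    by (rule cong2_dvd_modulus[OF _ cong2_scale[OF A1_square_cong]])
      (simp add: power2_eq_square mult.commute mult.left_commute)
  ultimately have "[A0 ^ 2 + 8 * e * (A0 * A1) + 16 * e ^ 2 * A1 ^ 2 =
      9 * A0 + 8 * e * (9 * A1) + 16 * e ^ 2 * 0] (mod 64 * e, D24)"
    by (intro cong2_add)
  then show ?thesis
    unfolding powers by (simp add: power2_eq_square algebra_simps)
qed

lemma binomial_power_cong:
  assumes "5 \<le> u"
  shows "[9 * [:1, 1:] ^ (3 * 2 ^ u) = A0 + 2 ^ (u - 3) * A1] (mod 2 ^ u, D24)"
  using assms
proof (induction u rule: dec_induct)
  case base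
  show ?case using binomial_power_cong_base by simp
next
  case (step u)
  let ?X = "[:1, 1:] ^ (3 * 2 ^ u) :: int poly"
  let ?R = "A0 + 2 ^ (u - 3) * A1"
  have u: "u = Suc (u - 1)" using step.hyps by simp
  have "2 ^ u = 2 * (2 ^ (u - 1) :: int poly)" "2 ^ Suc u = 4 * (2 ^ (u - 1) :: int poly)"
    by (subst u; simp)+
  with step.IH have lifted: "[(9 * ?X) ^ 2 = ?R ^ 2] (mod 2 ^ Suc u, D24)"
    by (metis cong2_square_lift)
  have "(9 * ?X) ^ 2 = 9 * (9 * [:1, 1:] ^ (3 * 2 ^ Suc u))"
    by (simp add: power2_eq_square power_add[symmetric] mult_2)
  with lifted have "[9 * (9 * [:1, 1:] ^ (3 * 2 ^ Suc u)) = ?R ^ 2] (mod 2 ^ Suc u, D24)"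
    by simp
  moreover have "Suc u - 3 = u - 2" using step.hyps by simp
  ultimately have cong9: "[9 * (9 * [:1, 1:] ^ (3 * 2 ^ Suc u)) =
      9 * (A0 + 2 ^ (Suc u - 3) * A1)] (mod 2 ^ Suc u, D24)"
    using cong2_trans square_A0_A1_cong[OF step.hyps(1)] by simp
  have "coprime (9 :: int) (2 ^ Suc u)" by simp
  then obtain a b :: int where "a * 9 + b * 2 ^ Suc u = 1"
    using bezout_int[of 9 "2 ^ Suc u"] by (auto simp: coprime_iff_gcd_eq_1)
  then have "of_int (a * 9 + b * 2 ^ Suc u) = (1 :: int poly)" by simp
  then have unit: "9 * of_int a + 2 ^ Suc u * of_int b = (1 :: int poly)" by (simp add: ac_simps)
  show ?case by (rule cong2_cancel_unit[OF unit cong9])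
qed

lemma toepl_eq_diagonal_entry:
  "toepl S1 S2 r s = toepl S1 S2 (nat (int r - int s) + 1) (nat (int s - int r) + 1)"
  unfolding toepl_def by (cases "s \<le> r") (simp_all add: nat_diff_distrib)

lemma coeff_pairing_A0_A1:
  assumes "r \<in> {1..24}" "s \<in> {1..24}"
  shows "coeff_pairing (toeplitz_weight 24 (int r - int s)) A0 = T0 r s"
    and "coeff_pairing (toeplitz_weight 24 (int r - int s)) A1 = T1 r s"
proof -
  have table: "\<forall>d\<in>{-23..23}.
      coeff_pairing (toeplitz_weight 24 d) A0 = T0 (nat d + 1) (nat (- d) + 1) \<and>
      coeff_pairing (toeplitz_weight 24 d) A1 = T1 (nat d + 1) (nat (- d) + 1)"
    unfolding coeff_pairing_def toeplitz_weight_def A0_def A1_def T0_def T1_def toepl_def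
    by code_simp
  have "int r - int s \<in> {-23..23}" using assms by auto
  with table show "coeff_pairing (toeplitz_weight 24 (int r - int s)) A0 = T0 r s"
    and "coeff_pairing (toeplitz_weight 24 (int r - int s)) A1 = T1 r s"
    unfolding T0_def T1_def by (subst toepl_eq_diagonal_entry; simp)+
qed

theorem theorem9:
  fixes u :: nat
  assumes "u \<ge> 5"
  shows "\<forall>r \<in> {1..24}. \<forall>s \<in> {1..24}.
           [9 * Tmat 24 (3 * 2 ^ u) r s = T0 r s + 2 ^ (u - 3) * T1 r s] (mod 2 ^ u)"
proof (intro ballI)
  fix r s :: nat
  assume rs: "r \<in> {1..24}" "s \<in> {1..24}"
  let ?f = "toeplitz_weight 24 (int r - int s)"
  have "?f (m + 2 * 24) - 2 * ?f (m + 24) + ?f m = 0" for m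
    by (rule toeplitz_weight_second_difference) simp
  moreover have "[9 * [:1, 1:] ^ (3 * 2 ^ u) = A0 + 2 ^ (u - 3) * A1]
      (mod [:2 ^ u:], (monom 1 24 - 1) ^ 2)"
    using binomial_power_cong[OF assms] by (simp add: D24_def numeral_poly poly_const_pow)
  ultimately have "2 ^ u dvd
      coeff_pairing ?f (9 * [:1, 1:] ^ (3 * 2 ^ u)) - coeff_pairing ?f (A0 + 2 ^ (u - 3) * A1)"
    by (rule coeff_pairing_cong2)
  moreover have "coeff_pairing ?f (9 * [:1, 1:] ^ (3 * 2 ^ u)) = 9 * Tmat 24 (3 * 2 ^ u) r s"
    by (simp add: numeral_poly coeff_pairing_smult Tmat_eq_coeff_pairing)
  moreover have "coeff_pairing ?f (A0 + 2 ^ (u - 3) * A1) = T0 r s + 2 ^ (u - 3) * T1 r s"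
    by (simp add: numeral_poly poly_const_pow coeff_pairing_add coeff_pairing_smult
        coeff_pairing_A0_A1[OF rs])
  ultimately show "[9 * Tmat 24 (3 * 2 ^ u) r s = T0 r s + 2 ^ (u - 3) * T1 r s] (mod 2 ^ u)"
    by (simp add: cong_iff_dvd_diff)
qed

end
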